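(* No ordinal metric on $\omega_1$ is an ultrametric; that is, for every ordinal metric $\rho:\omega_1^2\to\omega$ there are $\alpha,\beta,\gamma\in\omega_1$ with $\rho(\alpha,\beta)>\max(\rho(\alpha,\gamma),\rho(\gamma,\beta))$.
   Context: For a set of ordinals $X$, a function $\rho:X^2\to\omega$ is an ordinal metric if: (a) $\rho(\alpha,\beta)=0$ iff $\alpha=\beta$; (b) $\rho(\alpha,\beta)=\rho(\beta,\alpha)$; (c) for all $\alpha,\beta,\gamma\in X$ with $\alpha<\beta$ and $\alpha<\gamma$, $\rho(\alpha,\beta)\le\max(\rho(\alpha,\gamma),\rho(\beta,\gamma))$; (d) for every $\beta\in X$ and $k\in\omega$ the set $\{\alpha\le\beta:\rho(\alpha,\beta)\le k\}$ is finite. *)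

theory Defs
  imports Main "HOL-Library.Countable_Set"
begin

text \<open>omega_1 is represented by a well-ordered type that is uncountable while
every proper initial segment is countable; this characterises omega_1 up to
order isomorphism.\<close>

definition is_omega1 :: "'a::wellorder itself \<Rightarrow> bool" where
  "is_omega1 _ \<longleftrightarrow> \<not> countable (UNIV :: 'a set) \<and> (\<forall>x::'a. countable {y. y < x})"

definition ordinal_metric :: "'a::wellorder set \<Rightarrow> ('a \<Rightarrow> 'a \<Rightarrow> nat) \<Rightarrow> bool" where
  "ordinal_metric X \<rho> \<longleftrightarrow>
     (\<forall>\<alpha>\<in>X. \<forall>\<beta>\<in>X. \<rho> \<alpha> \<beta> = 0 \<longleftrightarrow> \<alpha> = \<beta>) \<and>
     (\<forall>\<alpha>\<in>X. \<forall>\<beta>\<in>X. \<rho> \<alpha> \<beta> = \<rho> \<beta> \<alpha>) \<and>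
     (\<forall>\<alpha>\<in>X. \<forall>\<beta>\<in>X. \<forall>\<gamma>\<in>X. \<alpha> < \<beta> \<and> \<alpha> < \<gamma> \<longrightarrow>
         \<rho> \<alpha> \<beta> \<le> max (\<rho> \<alpha> \<gamma>) (\<rho> \<beta> \<gamma>)) \<and>
     (\<forall>\<beta>\<in>X. \<forall>k::nat. finite {\<alpha>\<in>X. \<alpha> \<le> \<beta> \<and> \<rho> \<alpha> \<beta> \<le> k})"

end

theory Submission
  imports Defs
begin

text \<open>An ultrametric ordinal metric on X makes X countable: in an ultrametric every
point of the ball of radius k around a fixed centre is the centre of that same ball, so
by condition (d) every element of the ball has only finitely many predecessors in it,
and a linearly ordered set with finite initial segments is countable. X is the union of
countably many such balls, so it cannot be omega_1.\<close>

lemma countable_if_finite_initial_segments: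
  fixes S :: "'a::linorder set"
  assumes "\<And>x. x \<in> S \<Longrightarrow> finite {y\<in>S. y < x}"
  shows "countable S"
proof (rule countableI)
  show "inj_on (\<lambda>x. card {y\<in>S. y < x}) S"
  proof (rule strict_mono_on_imp_inj_on, rule strict_mono_onI)
    fix x x' assume "x \<in> S" "x' \<in> S" "x < x'"
    then have "{y\<in>S. y < x} \<subset> {y\<in>S. y < x'}" by auto
    with assms \<open>x' \<in> S\<close> show "card {y\<in>S. y < x} < card {y\<in>S. y < x'}"
      by (intro psubset_card_mono) auto
  qed
qed

lemma ordinal_metric_ultrametric_ball_countable:
  assumes metric: "ordinal_metric X \<rho>"
    and ultra: "\<And>a b c. a \<in> X \<Longrightarrow> b \<in> X \<Longrightarrow> c \<in> X \<Longrightarrow> \<rho> a b \<le> max (\<rho> a c) (\<rho> c b)"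
    and "b \<in> X"
  shows "countable {a\<in>X. \<rho> a b \<le> k}"
proof (rule countable_if_finite_initial_segments)
  fix x assume x: "x \<in> {a\<in>X. \<rho> a b \<le> k}"
  have "{y \<in> {a\<in>X. \<rho> a b \<le> k}. y < x} \<subseteq> {a\<in>X. a \<le> x \<and> \<rho> a x \<le> k}"
  proof
    fix y assume y: "y \<in> {y \<in> {a\<in>X. \<rho> a b \<le> k}. y < x}"
    have "\<rho> b x = \<rho> x b" using metric x \<open>b \<in> X\<close> unfolding ordinal_metric_def by blast
    moreover have "\<rho> y x \<le> max (\<rho> y b) (\<rho> b x)" using ultra x y \<open>b \<in> X\<close> by blast
    ultimately show "y \<in> {a\<in>X. a \<le> x \<and> \<rho> a x \<le> k}" using x y by auto
  qed
  moreover have "finite {a\<in>X. a \<le> x \<and> \<rho> a x \<le> k}"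
    using metric x unfolding ordinal_metric_def by blast
  ultimately show "finite {y \<in> {a\<in>X. \<rho> a b \<le> k}. y < x}" by (rule finite_subset)
qed

lemma ordinal_metric_ultrametric_countable:
  assumes "ordinal_metric X \<rho>"
    and "\<And>a b c. a \<in> X \<Longrightarrow> b \<in> X \<Longrightarrow> c \<in> X \<Longrightarrow> \<rho> a b \<le> max (\<rho> a c) (\<rho> c b)"
  shows "countable X"
proof (cases "X = {}")
  case False
  then obtain b where "b \<in> X" by blast
  then have "X = (\<Union>k. {a\<in>X. \<rho> a b \<le> k})" by auto
  also have "countable \<dots>"
    using ordinal_metric_ultrametric_ball_countable[OF assms \<open>b \<in> X\<close>] by blast
  finally show ?thesis .
qed simp

theorem mainTheorem20:
  fixes \<rho> :: "'a::wellorder \<Rightarrow> 'a \<Rightarrow> nat"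
  assumes "is_omega1 TYPE('a)"
    and "ordinal_metric UNIV \<rho>"
  shows "\<exists>\<alpha> \<beta> \<gamma>. \<rho> \<alpha> \<beta> > max (\<rho> \<alpha> \<gamma>) (\<rho> \<gamma> \<beta>)"
proof (rule ccontr)
  assume "\<not> ?thesis"
  then have "\<rho> a b \<le> max (\<rho> a c) (\<rho> c b)" for a b c by (meson not_less)
  with assms(2) have "countable (UNIV :: 'a set)"
    by (rule ordinal_metric_ultrametric_countable)
  with assms(1) show False unfolding is_omega1_def by blast
qed

end
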